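(* Assume the standing setting of the context, let $n\ge2$ and let $\mathbf{M}_\varepsilon^{\otimes n}$ be the product measure on $\mathcal{D}_\varepsilon^n$. For $i\ne j\in\{1,\dots,n\}$ and $T>0$ let $$\mathcal{C}_{i,j}(T)=\{(z_1,\dots,z_n)\in\mathcal{D}_\varepsilon^n:\ z_i=(s_i,x_i),\ z_j=(s_j,x_j),\ s_i=s_j\in[0,T),\ x_i\ne x_j\},\qquad \mathcal{C}=\bigcup_{T\in\mathbb{N}}\bigcup_{i\ne j}\mathcal{C}_{i,j}(T).$$ Then $\mathbf{M}_\varepsilon^{\otimes n}(\mathcal{C})=0$ almost surely.
   Context: Standing setting. Fix $d\in\mathbb{N}$ and $\varepsilon\in(0,1]$ with $\varepsilon^{-1}\in\mathbb{N}$; $\Lambda_\varepsilon=(\varepsilon\mathbb{Z}/\mathbb{Z})^d$, $\mathcal{D}_\varepsilon=[0,\infty)\times\Lambda_\varepsilon$. On a filtered probability space satisfying the usual conditions let $(\mathbb{M}_\varepsilon(t,x))_{t\ge0}$, $x\in\Lambda_\varepsilon$, be càdlàg square-integrable martingales, $\Delta_t\mathbb{M}_\varepsilon(x)=\mathbb{M}_\varepsilon(t,x)-\mathbb{M}_\varepsilon(t-,x)$, $\langle\cdot,\cdot\rangle$ the predictable quadratic covariation, all constants non-random and independent of $\varepsilon,s,t,x$, such that: (A1) $\langle \mathbb{M}_\varepsilon(x),\mathbb{M}_\varepsilon(y)\rangle_t=0$ for $x\neq y$, and $\langle\mathbb{M}_\varepsilon(x)\rangle_t=\varepsilon^{-d}\int_0^t\mathcal{C}_\varepsilon(s,x)\,ds$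 with $\mathcal{C}_\varepsilon$ progressively measurable, $|\mathcal{C}_\varepsilon|\le C$ a.s.; (A2) for every $T>0$, a.s. $\Delta_t\mathbb{M}_\varepsilon(x)\Delta_t\mathbb{M}_\varepsilon(y)=0$ for all $x\ne y$, $t\in[0,T]$; (A3) there exist $\mathbf{k}>-d/2$ and $c>0$ with a.s. $|\Delta_t\mathbb{M}_\varepsilon(x)|=c\varepsilon^{\mathbf{k}}$ whenever $\Delta_t\mathbb{M}_\varepsilon(x)\ne0$; (A4) $\mathbb{M}_\varepsilon(t,x)=\sum_{0\le s\le t}\Delta_s\mathbb{M}_\varepsilon(x)-\varepsilon^{-\mathbf{k}-d}\int_0^t\mathtt{C}_\varepsilon(s,x)\,ds$ with $\mathtt{C}_\varepsilon$ progressively measurable, $|\mathtt{C}_\varepsilon|\le C$ a.s. By (A4) the paths are a.s. of locally bounded variation, and $\mathbf{M}_\varepsilon$ denotes the random (signed) measure on $\mathcal{D}_\varepsilon$ given by $\int_{\mathcal{D}_\varepsilon}F\,d\mathbf{M}_\varepsilon=\sum_{x\in\Lambda_\varepsilon}\varepsilon^d\int_0^\infty F(s,x)\,d\mathbb{M}_\varepsilon(s,x)$ (Lebesgue–Stieltjes integral). *)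

theory Defs
  imports "HOL-Probability.Probability"
begin

text \<open>Lattice: eps = 1/N with N a positive natural number; a point of
  (eps Z / Z)^d is encoded by the list of its integer coordinates a_i in {0..N-1}
  (the point being (eps a_1, ..., eps a_d)).\<close>
definition Lam :: "nat \<Rightarrow> nat \<Rightarrow> nat list set" where
  "Lam N d = {xs. length xs = d \<and> (\<forall>a\<in>set xs. a < N)}"

definition Dset :: "nat \<Rightarrow> nat \<Rightarrow> (real \<times> nat list) set" where
  "Dset N d = {0..} \<times> Lam N d"

text \<open>Jump of a pth at time t, with the convention f(0-) = f(0).\<close>
definition jump :: "(real \<Rightarrow> real) \<Rightarrow> real \<Rightarrow> real" where
  "jump f t = (if t \<le> 0 then 0 else f t - Lim (at_left t) f)"

definition cadlag_on_nonneg :: "(real \<Rightarrow> real) \<Rightarrow> bool" where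
  "cadlag_on_nonneg f \<longleftrightarrow>
     (\<forall>t\<ge>0. continuous (at_right t) f) \<and> (\<forall>t>0. \<exists>l. (f \<longlongrightarrow> l) (at_left t))"

definition usual_filtration :: "'a measure \<Rightarrow> (real \<Rightarrow> 'a measure) \<Rightarrow> bool" where
  "usual_filtration P F \<longleftrightarrow>
     filtration (space P) F \<and> (\<forall>t. sets (F t) \<subseteq> sets P) \<and>
     (\<forall>t\<ge>0. sets (F t) = (\<Inter>u\<in>{t<..}. sets (F u))) \<and>
     (\<forall>A. A \<subseteq> space P \<and> (\<exists>B\<in>null_sets P. A \<subseteq> B) \<longrightarrow> A \<in> sets (F 0))"

definition martingale :: "'a measure \<Rightarrow> (real \<Rightarrow> 'a measure) \<Rightarrow> (real \<Rightarrow> 'a \<Rightarrow> real) \<Rightarrow> bool" where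
  "martingale P F X \<longleftrightarrow>
     (\<forall>t\<ge>0. X t \<in> borel_measurable (F t)) \<and> (\<forall>t\<ge>0. integrable P (X t)) \<and>
     (\<forall>s t. 0 \<le> s \<longrightarrow> s \<le> t \<longrightarrow> (AE \<omega> in P. real_cond_exp P (F s) (X t) \<omega> = X s \<omega>))"

definition cadlag_sq_int_martingale :: "'a measure \<Rightarrow> (real \<Rightarrow> 'a measure) \<Rightarrow> (real \<Rightarrow> 'a \<Rightarrow> real) \<Rightarrow> bool" where
  "cadlag_sq_int_martingale P F X \<longleftrightarrow>
     martingale P F X \<and> (\<forall>t\<ge>0. integrable P (\<lambda>\<omega>. (X t \<omega>)\<^sup>2)) \<and>
     (AE \<omega> in P. cadlag_on_nonneg (\<lambda>t. X t \<omega>))"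

definition progressive :: "(real \<Rightarrow> 'a measure) \<Rightarrow> (real \<Rightarrow> 'a \<Rightarrow> real) \<Rightarrow> bool" where
  "progressive F X \<longleftrightarrow>
     (\<forall>t\<ge>0. (\<lambda>(s, \<omega>). X s \<omega>) \<in> borel_measurable (restrict_space borel {0..t} \<Otimes>\<^sub>M F t))"

definition total_variation :: "(real \<Rightarrow> real) \<Rightarrow> real \<Rightarrow> real \<Rightarrow> real" where
  "total_variation f a b = Sup {(\<Sum>i<m. \<bar>f (p (Suc i)) - f (p i)\<bar>) | m p.
       p 0 = a \<and> p m = b \<and> (\<forall>i<m. p i \<le> p (Suc i))}"

text \<open>Total variation measure |df| on the real line of a (cadlag, locally BV) pth
  f on [0,oo) (no atom at 0, consistent with f(0-) = f(0)).\<close>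
definition tv_measure :: "(real \<Rightarrow> real) \<Rightarrow> real measure" where
  "tv_measure f = interval_measure (\<lambda>t. if t \<le> 0 then 0 else total_variation f 0 t)"

text \<open>Total variation measure |M_eps| of the random measure M_eps on D_eps for a fixed
  realisation; pth x t = M_eps(t,x)(omega).\<close>
definition Dmeas :: "nat \<Rightarrow> nat \<Rightarrow> (nat list \<Rightarrow> real \<Rightarrow> real) \<Rightarrow> (real \<times> nat list) measure" where
  "Dmeas N d pth = measure_of (Dset N d)
     (sets (restrict_space (borel \<Otimes>\<^sub>M count_space UNIV) (Dset N d)))
     (\<lambda>A. \<Sum>x\<in>Lam N d. ennreal ((1 / real N) ^ d) * emeasure (tv_measure (pth x)) {s. (s, x) \<in> A})"

text \<open>The set C (indices 0..n-1 instead of 1..n).\<close>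
definition Cset :: "nat \<Rightarrow> nat \<Rightarrow> nat \<Rightarrow> (nat \<Rightarrow> real \<times> nat list) set" where
  "Cset N d n = {z \<in> ({..<n} \<rightarrow>\<^sub>E Dset N d). \<exists>T::nat. \<exists>i<n. \<exists>j<n. i \<noteq> j \<and>
       fst (z i) = fst (z j) \<and> fst (z i) \<in> {0..<real T} \<and> snd (z i) \<noteq> snd (z j)}"

end

theory Submission
  imports Defs
begin

text \<open>Almost surely every path \<open>M\<^sub>x\<close> is cadlag with jumps of the fixed size
  \<open>c \<epsilon>\<^sup>k\<close>, so its jumps are locally finite, and by (A4) it is a finite sum of jumps minus a
  Lipschitz drift. Its total variation measure \<open>|dM\<^sub>x|\<close> is then locally finite and has atoms
  only at jump times. To see that \<open>{z\<^sub>i, z\<^sub>j at the same time, different sites}\<close> is null,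
  integrate out \<open>z\<^sub>i\<close> given \<open>z\<^sub>j = (s, x)\<close>: the section \<open>{s} \<times> (\<Lambda> - {x})\<close> only
  carries atoms of other sites at time \<open>s\<close>, which vanish unless another site jumps at \<open>s\<close>.
  By (A2) such \<open>(s, x)\<close> form a countable set where \<open>x\<close> itself does not jump, so it is
  \<open>|dM|\<close>-null as well.\<close>

section \<open>Total variation under a dominating function\<close>

definition increments_dominated_on :: "real set \<Rightarrow> (real \<Rightarrow> real) \<Rightarrow> (real \<Rightarrow> real) \<Rightarrow> bool" where
  "increments_dominated_on S f H \<longleftrightarrow> (\<forall>r\<in>S. \<forall>r'\<in>S. r' \<le> r \<longrightarrow> \<bar>f r - f r'\<bar> \<le> H r - H r')"

lemma increments_dominated_on_subset:
  "increments_dominated_on S f H \<Longrightarrow> T \<subseteq> S \<Longrightarrow> increments_dominated_on T f H"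
  unfolding increments_dominated_on_def by blast

definition variation_sum :: "(real \<Rightarrow> real) \<Rightarrow> (nat \<Rightarrow> real) \<Rightarrow> nat \<Rightarrow> real" where
  "variation_sum f p m = (\<Sum>i<m. \<bar>f (p (Suc i)) - f (p i)\<bar>)"

definition partition_of :: "real \<Rightarrow> real \<Rightarrow> (nat \<Rightarrow> real) \<Rightarrow> nat \<Rightarrow> bool" where
  "partition_of a b p m \<longleftrightarrow> p 0 = a \<and> p m = b \<and> (\<forall>i<m. p i \<le> p (Suc i))"

lemma total_variation_eq_Sup:
  "total_variation f a b = Sup {variation_sum f p m | m p. partition_of a b p m}"
  unfolding total_variation_def variation_sum_def partition_of_def by simp

lemma variation_sum_nonneg: "0 \<le> variation_sum f p m"
  unfolding variation_sum_def by (simp add: sum_nonneg)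

lemma partition_of_range:
  assumes "partition_of a b p m" "i \<le> m"
  shows "a \<le> p i \<and> p i \<le> b"
proof -
  define q where "q i = p (min i m)" for i
  have "q i \<le> q (Suc i)" for i
    using assms(1) unfolding partition_of_def q_def by (cases "i < m") (auto simp: min_def)
  then have "mono q" by (rule mono_iff_le_Suc[THEN iffD2, rule_format])
  then have "q 0 \<le> q i" "q i \<le> q m" using assms(2) by (auto dest: monoD)
  then show ?thesis using assms unfolding partition_of_def q_def by (auto simp: min_def)
qed

lemma partition_of_two_points: "a \<le> b \<Longrightarrow> partition_of a b (\<lambda>i. if i = 0 then a else b) 1"
  unfolding partition_of_def by simp

lemma partition_of_snoc:
  "partition_of a b p m \<Longrightarrow> b \<le> c \<Longrightarrow> partition_of a c (p(Suc m := c)) (Suc m)"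
  unfolding partition_of_def by auto

lemma variation_sum_snoc:
  "variation_sum f (p(Suc m := c)) (Suc m) = variation_sum f p m + \<bar>f c - f (p m)\<bar>"
  unfolding variation_sum_def by (simp add: lessThan_Suc)

lemma variation_sum_le_dominating:
  assumes "increments_dominated_on {a..b} f H" "partition_of a b p m"
  shows "variation_sum f p m \<le> H b - H a"
proof -
  have "variation_sum f p m \<le> (\<Sum>i<m. H (p (Suc i)) - H (p i))"
    unfolding variation_sum_def
  proof (rule sum_mono)
    fix i assume "i \<in> {..<m}"
    then show "\<bar>f (p (Suc i)) - f (p i)\<bar> \<le> H (p (Suc i)) - H (p i)"
      using assms partition_of_range[OF assms(2), of i] partition_of_range[OF assms(2), of "Suc i"]
      unfolding increments_dominated_on_def partition_of_def by auto
  qed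
  also have "\<dots> = H (p m) - H (p 0)" by (rule sum_lessThan_telescope)
  finally show ?thesis using assms(2) unfolding partition_of_def by simp
qed

lemma partition_of_split:
  assumes "partition_of a c p m" "a \<le> b" "b \<le> c"
  obtains p1 m1 p2 m2 where "partition_of a b p1 m1" "partition_of b c p2 m2"
    "variation_sum f p m \<le> variation_sum f p1 m1 + variation_sum f p2 m2"
  using assms
proof (induction m arbitrary: c thesis)
  case 0
  then have "b = a" "c = b" unfolding partition_of_def by auto
  then show ?case
    using 0(1)[of "\<lambda>_. a" 0 "\<lambda>_. a" 0] by (simp add: partition_of_def variation_sum_def)
next
  case (Suc m)
  let ?p = "\<lambda>i. if i = 0 then b else c"
  have pm: "a \<le> p m" "p m \<le> c" using partition_of_range[OF Suc.prems(2), of m] by auto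
  have init: "partition_of a (p m) p m" using Suc.prems(2) unfolding partition_of_def by auto
  have sum_Suc: "variation_sum f p (Suc m) = variation_sum f p m + \<bar>f c - f (p m)\<bar>"
    using Suc.prems(2) unfolding variation_sum_def partition_of_def by simp
  show ?case
  proof (cases "p m \<le> b")
    case True
    have "partition_of a b (p(Suc m := b)) (Suc m)" by (rule partition_of_snoc[OF init True])
    moreover have "partition_of b c ?p 1" using Suc.prems by (intro partition_of_two_points)
    moreover have "\<bar>f c - f (p m)\<bar> \<le> \<bar>f b - f (p m)\<bar> + \<bar>f c - f b\<bar>" by linarith
    ultimately show ?thesis
      using Suc.prems(1) sum_Suc by (simp add: variation_sum_snoc variation_sum_def)
  next
    case False
    obtain p1 m1 p2 m2 where IH: "partition_of a b p1 m1" "partition_of b (p m) p2 m2"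
      "variation_sum f p m \<le> variation_sum f p1 m1 + variation_sum f p2 m2"
      using Suc.IH[OF _ init Suc.prems(3)] False by (metis linear)
    have "p2 m2 = p m" using IH(2) unfolding partition_of_def by simp
    then have "variation_sum f p (Suc m) \<le> variation_sum f p1 m1 + variation_sum f (p2(Suc m2 := c)) (Suc m2)"
      using IH(3) sum_Suc by (simp add: variation_sum_snoc)
    then show ?thesis by (rule Suc.prems(1)[OF IH(1) partition_of_snoc[OF IH(2) pm(2)]])
  qed
qed

lemma bdd_above_variation_sums:
  assumes "increments_dominated_on {a..b} f H"
  shows "bdd_above {variation_sum f p m | m p. partition_of a b p m}"
  using variation_sum_le_dominating[OF assms] by (intro bdd_aboveI[of _ "H b - H a"]) auto

lemma variation_sum_le_total_variation:
  assumes "increments_dominated_on {a..b} f H" "partition_of a b p m"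
  shows "variation_sum f p m \<le> total_variation f a b"
  unfolding total_variation_eq_Sup
  by (rule cSup_upper[OF _ bdd_above_variation_sums[OF assms(1)]]) (use assms(2) in blast)

lemma total_variation_least:
  assumes "a \<le> b" "\<And>p m. partition_of a b p m \<Longrightarrow> variation_sum f p m \<le> y"
  shows "total_variation f a b \<le> y"
  unfolding total_variation_eq_Sup
  using partition_of_two_points[OF assms(1)] assms(2) by (intro cSup_least) blast+

lemma total_variation_nonneg:
  assumes "increments_dominated_on {a..b} f H" "a \<le> b"
  shows "0 \<le> total_variation f a b"
  using variation_sum_nonneg
    variation_sum_le_total_variation[OF assms(1) partition_of_two_points[OF assms(2)]]
  by (rule order_trans)

lemma total_variation_same: "total_variation f a a = 0"
proof (rule antisym)
  have dom: "increments_dominated_on {a..a} f (\<lambda>_. 0)"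
    unfolding increments_dominated_on_def by simp
  show "total_variation f a a \<le> 0"
    using variation_sum_le_dominating[OF dom] by (intro total_variation_least) auto
  show "0 \<le> total_variation f a a"
    by (rule total_variation_nonneg[OF dom order_refl])
qed

lemma total_variation_mono:
  assumes "increments_dominated_on {a..c} f H" "a \<le> b" "b \<le> c"
  shows "total_variation f a b \<le> total_variation f a c"
proof (rule total_variation_least[OF assms(2)])
  fix p m assume "partition_of a b p m"
  then have "variation_sum f p m \<le> variation_sum f (p(Suc m := c)) (Suc m)"
    by (simp add: variation_sum_snoc)
  also have "\<dots> \<le> total_variation f a c"
    by (rule variation_sum_le_total_variation[OF assms(1) partition_of_snoc]) fact+
  finally show "variation_sum f p m \<le> total_variation f a c" .
qed

lemma total_variation_split_le:
  assumes "increments_dominated_on {a..c} f H" "increments_dominated_on {b..c} f H'"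
    and "a \<le> b" "b \<le> c"
  shows "total_variation f a c \<le> total_variation f a b + (H' c - H' b)"
proof (rule total_variation_least)
  show "a \<le> c" using assms by simp
  fix p m assume "partition_of a c p m"
  then obtain p1 m1 p2 m2 where split: "partition_of a b p1 m1" "partition_of b c p2 m2"
      "variation_sum f p m \<le> variation_sum f p1 m1 + variation_sum f p2 m2"
    using partition_of_split assms(3,4) by metis
  have "variation_sum f p1 m1 \<le> total_variation f a b"
    using assms(1,4) by (intro variation_sum_le_total_variation[OF _ split(1)])
      (auto intro: increments_dominated_on_subset)
  moreover have "variation_sum f p2 m2 \<le> H' c - H' b"
    by (rule variation_sum_le_dominating[OF assms(2) split(2)])
  ultimately show "variation_sum f p m \<le> total_variation f a b + (H' c - H' b)"
    using split(3) by linarith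
qed

definition tv_fun :: "(real \<Rightarrow> real) \<Rightarrow> real \<Rightarrow> real" where
  "tv_fun f t = (if t \<le> 0 then 0 else total_variation f 0 t)"

lemma tv_measure_eq_interval_measure: "tv_measure f = interval_measure (tv_fun f)"
  unfolding tv_measure_def tv_fun_def ..

lemma tv_fun_nonneg_eq: "0 \<le> t \<Longrightarrow> tv_fun f t = total_variation f 0 t"
  unfolding tv_fun_def by (simp add: total_variation_same)

lemma mono_tv_fun:
  assumes "increments_dominated_on {0..} f H"
  shows "mono (tv_fun f)"
proof (rule monoI)
  fix s t :: real assume "s \<le> t"
  have "increments_dominated_on {0..t} f H"
    using assms by (rule increments_dominated_on_subset) auto
  then show "tv_fun f s \<le> tv_fun f t"
    using \<open>s \<le> t\<close> total_variation_mono total_variation_nonneg unfolding tv_fun_def by auto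
qed

lemma tv_fun_increment_le:
  assumes "increments_dominated_on {0..} f H" "increments_dominated_on {a..b} f H'"
    and "0 \<le> a" "a \<le> b"
  shows "tv_fun f b - tv_fun f a \<le> H' b - H' a"
proof -
  have "increments_dominated_on {0..b} f H"
    using assms(1) by (rule increments_dominated_on_subset) auto
  from total_variation_split_le[OF this assms(2-4)] show ?thesis
    using assms(3,4) by (simp add: tv_fun_nonneg_eq)
qed

section \<open>Jumps of cadlag paths\<close>

definition jump_set :: "(real \<Rightarrow> real) \<Rightarrow> real set" where
  "jump_set f = {t. jump f t \<noteq> 0}"

lemma jump_nonpos: "t \<le> 0 \<Longrightarrow> jump f t = 0"
  by (simp add: jump_def)

lemma jump_set_subset: "jump_set f \<subseteq> {0<..}"
  unfolding jump_set_def by (auto simp: jump_def not_le)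

lemma abs_jump_le_oscillation:
  assumes "cadlag_on_nonneg f" "0 < s" "a < s" "\<And>r. a < r \<Longrightarrow> r \<le> s \<Longrightarrow> \<bar>f r - v\<bar> \<le> e"
  shows "\<bar>jump f s\<bar> \<le> 2 * e"
proof -
  obtain l where l: "(f \<longlongrightarrow> l) (at_left s)"
    using assms(1,2) unfolding cadlag_on_nonneg_def by auto
  have "eventually (\<lambda>r. \<bar>f r - v\<bar> \<le> e) (at_left s)"
    using eventually_at_left_real[OF assms(3)] by eventually_elim (use assms(4) in auto)
  moreover have "((\<lambda>r. \<bar>f r - v\<bar>) \<longlongrightarrow> \<bar>l - v\<bar>) (at_left s)"
    by (intro tendsto_intros l)
  ultimately have "\<bar>l - v\<bar> \<le> e"
    by (intro tendsto_upperbound) auto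
  moreover have "Lim (at_left s) f = l" by (intro tendsto_Lim l) simp
  ultimately show ?thesis
    using assms(2,3) assms(4)[of s] unfolding jump_def by auto
qed

lemma cadlag_no_jump_where_oscillation_small:
  assumes "cadlag_on_nonneg f" "\<And>t. jump f t \<noteq> 0 \<Longrightarrow> \<delta> \<le> \<bar>jump f t\<bar>"
    and "0 \<le> a" "\<And>r. a < r \<Longrightarrow> r < b \<Longrightarrow> \<bar>f r - v\<bar> < \<delta> / 3"
    and "a < s" "s < b"
  shows "jump f s = 0"
proof (rule ccontr)
  assume "jump f s \<noteq> 0"
  moreover have "\<bar>jump f s\<bar> \<le> 2 * (\<delta> / 3)"
    using assms by (intro abs_jump_le_oscillation[of f s a v]) (auto intro: less_imp_le)
  ultimately show False using assms(2)[of s] abs_ge_zero[of "jump f s"] by linarith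
qed

lemma cadlag_jump_free_right:
  assumes cadlag: "cadlag_on_nonneg f" and "\<delta> > 0"
    and big_jumps: "\<And>t. jump f t \<noteq> 0 \<Longrightarrow> \<delta> \<le> \<bar>jump f t\<bar>" and "0 \<le> t"
  obtains b where "t < b" "\<And>s. t < s \<Longrightarrow> s < b \<Longrightarrow> jump f s = 0"
proof -
  have "(f \<longlongrightarrow> f t) (at_right t)"
    using cadlag \<open>0 \<le> t\<close> unfolding cadlag_on_nonneg_def continuous_within by auto
  then have "eventually (\<lambda>r. dist (f r) (f t) < \<delta> / 3) (at_right t)"
    by (rule tendstoD) (use \<open>\<delta> > 0\<close> in simp)
  then obtain b where "t < b" and osc: "\<And>r. t < r \<Longrightarrow> r < b \<Longrightarrow> \<bar>f r - f t\<bar> < \<delta> / 3"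
    unfolding eventually_at_right[of t "t + 1", simplified] by (auto simp: dist_real_def)
  show ?thesis
    by (rule that[OF \<open>t < b\<close> cadlag_no_jump_where_oscillation_small[OF cadlag big_jumps \<open>0 \<le> t\<close> osc]])
qed

lemma cadlag_jump_free_left:
  assumes cadlag: "cadlag_on_nonneg f" and "\<delta> > 0"
    and big_jumps: "\<And>t. jump f t \<noteq> 0 \<Longrightarrow> \<delta> \<le> \<bar>jump f t\<bar>" and "0 < t"
  obtains a where "a < t" "\<And>s. a < s \<Longrightarrow> s < t \<Longrightarrow> jump f s = 0"
proof -
  obtain l where "(f \<longlongrightarrow> l) (at_left t)"
    using cadlag \<open>0 < t\<close> unfolding cadlag_on_nonneg_def by force
  then have "eventually (\<lambda>r. dist (f r) l < \<delta> / 3) (at_left t)"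
    by (rule tendstoD) (use \<open>\<delta> > 0\<close> in simp)
  then obtain a where "a < t" and osc: "\<And>r. a < r \<Longrightarrow> r < t \<Longrightarrow> \<bar>f r - l\<bar> < \<delta> / 3"
    unfolding eventually_at_left[of "t - 1" t, simplified] by (auto simp: dist_real_def)
  show ?thesis
  proof (rule that[of "max a 0"])
    show "max a 0 < t" using \<open>a < t\<close> \<open>0 < t\<close> by simp
    show "jump f s = 0" if "max a 0 < s" "s < t" for s
      using that osc
      by (intro cadlag_no_jump_where_oscillation_small[OF cadlag big_jumps, where a="max a 0" and b=t and v=l])
        auto
  qed
qed

lemma cadlag_jumps_isolated:
  assumes cadlag: "cadlag_on_nonneg f" and "\<delta> > 0"
    and big_jumps: "\<And>t. jump f t \<noteq> 0 \<Longrightarrow> \<delta> \<le> \<bar>jump f t\<bar>" and "0 \<le> t"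
  obtains e where "e > 0" "\<And>s. \<bar>s - t\<bar> < e \<Longrightarrow> s \<noteq> t \<Longrightarrow> jump f s = 0"
proof -
  obtain b where "t < b" and right: "\<And>s. t < s \<Longrightarrow> s < b \<Longrightarrow> jump f s = 0"
    using cadlag_jump_free_right[OF assms] by blast
  obtain a where "a < t" and left: "\<And>s. a < s \<Longrightarrow> s < t \<Longrightarrow> jump f s = 0"
  proof (cases "t = 0")
    case True
    then show ?thesis using that[of "-1"] jump_nonpos by force
  next
    case False
    with \<open>0 \<le> t\<close> have "0 < t" by simp
    show ?thesis using cadlag_jump_free_left[OF cadlag \<open>\<delta> > 0\<close> big_jumps \<open>0 < t\<close>] that by blast
  qed
  show ?thesis
  proof (rule that[of "min (b - t) (t - a)"])
    show "min (b - t) (t - a) > 0" using \<open>a < t\<close> \<open>t < b\<close> by simp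
    fix s assume "\<bar>s - t\<bar> < min (b - t) (t - a)" "s \<noteq> t"
    then consider "a < s" "s < t" | "t < s" "s < b" by fastforce
    then show "jump f s = 0" by cases (fact left right)+
  qed
qed

lemma finite_jump_set_cadlag:
  assumes "cadlag_on_nonneg f" "\<delta> > 0" "\<And>t. jump f t \<noteq> 0 \<Longrightarrow> \<delta> \<le> \<bar>jump f t\<bar>"
  shows "finite (jump_set f \<inter> {..T})"
proof -
  have "\<forall>t\<in>{0..T}. \<exists>e>0. \<forall>s. \<bar>s - t\<bar> < e \<longrightarrow> s \<noteq> t \<longrightarrow> jump f s = 0"
    using cadlag_jumps_isolated[OF assms] by (metis atLeastAtMost_iff)
  then obtain e where e: "\<And>t. t \<in> {0..T} \<Longrightarrow> e t > 0"
    "\<And>t s. t \<in> {0..T} \<Longrightarrow> \<bar>s - t\<bar> < e t \<Longrightarrow> s \<noteq> t \<Longrightarrow> jump f s = 0"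
    by metis
  obtain D where D: "D \<subseteq> {0..T}" "finite D" "{0..T} \<subseteq> (\<Union>t\<in>D. ball t (e t))"
    using compactE_image[OF compact_Icc, of "{0..T}" "\<lambda>t. ball t (e t)"] e(1) by force
  have "jump_set f \<inter> {..T} \<subseteq> D"
  proof
    fix s assume s: "s \<in> jump_set f \<inter> {..T}"
    then have "s \<in> {0..T}" using jump_set_subset by force
    then obtain t where "t \<in> D" "\<bar>s - t\<bar> < e t"
      using D(3) by (force simp: dist_real_def abs_minus_commute)
    with s D(1) e(2)[of t s] show "s \<in> D" unfolding jump_set_def by (cases "s = t") auto
  qed
  then show ?thesis using D(2) by (rule finite_subset)
qed

section \<open>Finitely many jumps plus a Lipschitz drift\<close>

lemma exists_small_linear_bound:
  fixes h0 K \<epsilon> :: real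
  assumes "0 < h0" "0 \<le> K" "0 < \<epsilon>"
  obtains h where "0 < h" "h < h0" "K * h < \<epsilon>"
proof -
  define h where "h = min (h0 / 2) (\<epsilon> / (2 * (K + 1)))"
  have "0 < h" "h < h0" using assms unfolding h_def by auto
  have "K * h \<le> (K + 1) * (\<epsilon> / (2 * (K + 1)))"
    using assms \<open>0 < h\<close> unfolding h_def by (intro mult_mono) auto
  also have "\<dots> = \<epsilon> / 2" using assms by (simp add: field_simps)
  finally have "K * h < \<epsilon>" using assms by simp
  with \<open>0 < h\<close> \<open>h < h0\<close> show ?thesis by (rule that)
qed

locale jump_drift_path =
  fixes f L :: "real \<Rightarrow> real" and K :: real
  assumes finite_jump_set: "\<And>T. finite (jump_set f \<inter> {..T})"
    and decomposition: "\<And>t. 0 \<le> t \<Longrightarrow> f t = (\<Sum>s\<in>jump_set f \<inter> {0..t}. jump f s) - L t"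
    and drift_lipschitz: "\<And>r r'. 0 \<le> r' \<Longrightarrow> r' \<le> r \<Longrightarrow> \<bar>L r - L r'\<bar> \<le> K * (r - r')"
begin

lemma lipschitz_constant_nonneg: "0 \<le> K"
  using drift_lipschitz[of 0 1] by simp

lemma finite_jump_set_Int: "A \<subseteq> {..T} \<Longrightarrow> finite (jump_set f \<inter> A)"
  using finite_jump_set[of T] by (rule finite_subset[rotated]) auto

lemma sum_jump_set_split:
  assumes "0 \<le> r'" "r' \<le> r"
  shows "(\<Sum>s\<in>jump_set f \<inter> {0..r}. g s) =
    (\<Sum>s\<in>jump_set f \<inter> {0..r'}. g s) + (\<Sum>s\<in>jump_set f \<inter> {r'<..r}. g s)"
proof -
  have "jump_set f \<inter> {0..r} = (jump_set f \<inter> {0..r'}) \<union> (jump_set f \<inter> {r'<..r})"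
    using assms by auto
  moreover have "finite (jump_set f \<inter> {0..r'})" "finite (jump_set f \<inter> {r'<..r})"
    by (auto intro: finite_jump_set_Int[of _ r'] finite_jump_set_Int[of _ r])
  ultimately show ?thesis
    by (simp add: sum.union_disjoint[symmetric] disjoint_iff)
qed

lemma abs_increment_le:
  assumes "0 \<le> r'" "r' \<le> r"
  shows "\<bar>f r - f r'\<bar> \<le> (\<Sum>s\<in>jump_set f \<inter> {r'<..r}. \<bar>jump f s\<bar>) + K * (r - r')"
proof -
  have "f r - f r' = (\<Sum>s\<in>jump_set f \<inter> {r'<..r}. jump f s) - (L r - L r')"
    using decomposition[of r] decomposition[of r'] sum_jump_set_split[OF assms, of "jump f"] assms
    by simp
  moreover have "\<bar>\<Sum>s\<in>jump_set f \<inter> {r'<..r}. jump f s\<bar> \<le> (\<Sum>s\<in>jump_set f \<inter> {r'<..r}. \<bar>jump f s\<bar>)"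
    by (rule sum_abs)
  ultimately show ?thesis using drift_lipschitz[OF assms] by linarith
qed

lemma increments_dominated:
  "increments_dominated_on {0..} f (\<lambda>t. (\<Sum>s\<in>jump_set f \<inter> {0..t}. \<bar>jump f s\<bar>) + K * t)"
  unfolding increments_dominated_on_def
proof (intro ballI impI)
  fix r r' :: real assume "r \<in> {0..}" "r' \<in> {0..}" "r' \<le> r"
  then show "\<bar>f r - f r'\<bar> \<le> (\<Sum>s\<in>jump_set f \<inter> {0..r}. \<bar>jump f s\<bar>) + K * r -
      ((\<Sum>s\<in>jump_set f \<inter> {0..r'}. \<bar>jump f s\<bar>) + K * r')"
    using abs_increment_le[of r' r] sum_jump_set_split[of r' r "\<lambda>s. \<bar>jump f s\<bar>"]
    by (simp add: right_diff_distrib)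
qed

lemma increments_dominated_jump_free:
  assumes "0 \<le> a" "jump_set f \<inter> {a<..b} = {}"
  shows "increments_dominated_on {a..b} f (\<lambda>t. K * t)"
  unfolding increments_dominated_on_def
proof (intro ballI impI)
  fix r r' :: real assume "r \<in> {a..b}" "r' \<in> {a..b}" "r' \<le> r"
  moreover from this have "jump_set f \<inter> {r'<..r} = {}" using assms(2) by auto
  ultimately show "\<bar>f r - f r'\<bar> \<le> K * r - K * r'"
    using abs_increment_le[of r' r] assms(1) by (simp add: right_diff_distrib)
qed

lemma tv_fun_mono: "mono (tv_fun f)"
  by (rule mono_tv_fun[OF increments_dominated])

lemma tv_fun_increment_le_jump_free:
  assumes "0 \<le> a" "a \<le> b" "jump_set f \<inter> {a<..b} = {}"
  shows "tv_fun f b - tv_fun f a \<le> K * (b - a)"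
  using tv_fun_increment_le[OF increments_dominated increments_dominated_jump_free[OF assms(1,3)] assms(1,2)]
  by (simp add: algebra_simps)

lemma jump_set_isolated:
  obtains e where "e > 0" "\<And>s. s \<in> jump_set f \<Longrightarrow> \<bar>s - t\<bar> < e \<Longrightarrow> s = t"
proof -
  obtain e where "e > 0" "\<forall>s\<in>jump_set f \<inter> {..t + 1}. s \<noteq> t \<longrightarrow> e \<le> dist t s"
    using finite_set_avoid[OF finite_jump_set_Int[OF order_refl]] by blast
  then show ?thesis
    by (intro that[of "min e 1"]) (auto simp: dist_real_def abs_minus_commute abs_less_iff)
qed

lemma tv_fun_right_increment_le:
  obtains h0 where "h0 > 0" "\<And>h. 0 < h \<Longrightarrow> h < h0 \<Longrightarrow> tv_fun f (a + h) - tv_fun f a \<le> K * h"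
proof (cases "a < 0")
  case True
  then show ?thesis
    using lipschitz_constant_nonneg by (intro that[of "- a"]) (auto simp: tv_fun_def)
next
  case False
  obtain e where "e > 0" and e: "\<And>s. s \<in> jump_set f \<Longrightarrow> \<bar>s - a\<bar> < e \<Longrightarrow> s = a"
    using jump_set_isolated[of a] by blast
  show ?thesis
  proof (rule that[OF \<open>e > 0\<close>])
    fix h assume "0 < h" "h < e"
    then have "jump_set f \<inter> {a<..a + h} = {}" using e by force
    then show "tv_fun f (a + h) - tv_fun f a \<le> K * h"
      using tv_fun_increment_le_jump_free[of a "a + h"] False \<open>0 < h\<close> by simp
  qed
qed

lemma tv_fun_left_increment_le:
  assumes "jump f t = 0"
  obtains h0 where "h0 > 0" "\<And>h. 0 < h \<Longrightarrow> h < h0 \<Longrightarrow> tv_fun f t - tv_fun f (t - h) \<le> K * h"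
proof (cases "t \<le> 0")
  case True
  then show ?thesis
    using lipschitz_constant_nonneg by (intro that[of 1]) (auto simp: tv_fun_def)
next
  case False
  obtain e where "e > 0" and e: "\<And>s. s \<in> jump_set f \<Longrightarrow> \<bar>s - t\<bar> < e \<Longrightarrow> s = t"
    using jump_set_isolated[of t] by blast
  show ?thesis
  proof (rule that[of "min e t"])
    show "min e t > 0" using \<open>e > 0\<close> False by simp
    fix h assume "0 < h" "h < min e t"
    then have "jump_set f \<inter> {t - h<..t} = {}"
      using e assms unfolding jump_set_def by force
    then show "tv_fun f t - tv_fun f (t - h) \<le> K * h"
      using tv_fun_increment_le_jump_free[of "t - h" t] \<open>0 < h\<close> \<open>h < min e t\<close> by simp
  qed
qed

lemma continuous_at_right_tv_fun: "continuous (at_right a) (tv_fun f)"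
proof (subst continuous_at_right_real_increasing)
  show "tv_fun f x \<le> tv_fun f y" if "x \<le> y" for x y
    using tv_fun_mono that by (rule monoD)
  show "\<forall>\<epsilon>>0. \<exists>\<delta>>0. tv_fun f (a + \<delta>) - tv_fun f a < \<epsilon>"
  proof (intro allI impI)
    fix \<epsilon> :: real assume "\<epsilon> > 0"
    obtain h0 where "h0 > 0" and h0: "\<And>h. 0 < h \<Longrightarrow> h < h0 \<Longrightarrow> tv_fun f (a + h) - tv_fun f a \<le> K * h"
      using tv_fun_right_increment_le[of a] by blast
    obtain h where "0 < h" "h < h0" "K * h < \<epsilon>"
      using exists_small_linear_bound[OF \<open>h0 > 0\<close> lipschitz_constant_nonneg \<open>\<epsilon> > 0\<close>] .
    then show "\<exists>\<delta>>0. tv_fun f (a + \<delta>) - tv_fun f a < \<epsilon>"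
      using h0[of h] by (intro exI[of _ h]) simp
  qed
qed

lemma emeasure_tv_measure_Ioc:
  "a \<le> b \<Longrightarrow> emeasure (tv_measure f) {a<..b} = ennreal (tv_fun f b - tv_fun f a)"
  unfolding tv_measure_eq_interval_measure
  by (intro emeasure_interval_measure_Ioc continuous_at_right_tv_fun monoD[OF tv_fun_mono])

lemma emeasure_tv_measure_Ioc_finite: "emeasure (tv_measure f) {a<..b} < \<infinity>"
  by (cases "a \<le> b") (simp_all add: emeasure_tv_measure_Ioc)

lemma emeasure_tv_measure_singleton:
  assumes "jump f t = 0"
  shows "emeasure (tv_measure f) {t} = 0"
proof -
  obtain h0 where "h0 > 0" and h0: "\<And>h. 0 < h \<Longrightarrow> h < h0 \<Longrightarrow> tv_fun f t - tv_fun f (t - h) \<le> K * h"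
    using tv_fun_left_increment_le[OF assms] by blast
  have "emeasure (tv_measure f) {t} \<le> ennreal \<epsilon>" if "\<epsilon> > 0" for \<epsilon>
  proof -
    obtain h where h: "0 < h" "h < h0" "K * h < \<epsilon>"
      using exists_small_linear_bound[OF \<open>h0 > 0\<close> lipschitz_constant_nonneg \<open>\<epsilon> > 0\<close>] .
    have "emeasure (tv_measure f) {t} \<le> emeasure (tv_measure f) {t - h<..t}"
      using \<open>0 < h\<close> by (intro emeasure_mono) (auto simp: tv_measure_def)
    also have "\<dots> = ennreal (tv_fun f t - tv_fun f (t - h))"
      using \<open>0 < h\<close> by (simp add: emeasure_tv_measure_Ioc)
    also have "\<dots> \<le> ennreal \<epsilon>"
      using h h0[of h] by (intro ennreal_leI) simp
    finally show ?thesis .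
  qed
  then have "emeasure (tv_measure f) {t} \<le> 0"
    by (metis ennreal_le_epsilon add_0)
  then show ?thesis by simp
qed

lemma countable_jump_set: "countable (jump_set f)"
proof -
  have "jump_set f = (\<Union>T::nat. jump_set f \<inter> {..real T})"
    by (auto intro: real_nat_ceiling_ge)
  also have "countable \<dots>"
    using finite_jump_set by (intro countable_UN[OF countableI_type] countable_finite)
  finally show ?thesis .
qed

end

section \<open>The space-time measure and its products\<close>

lemma (in product_sigma_finite) AE_PiM_component_notin:
  assumes "finite I" "j \<in> I" "E \<in> null_sets (M j)"
  shows "AE x in PiM I M. x j \<notin> E"
proof (rule AE_I')
  let ?B = "Pi\<^sub>E I (\<lambda>k. if k = j then E else space (M k))"
  have sets: "?B \<in> sets (PiM I M)"
    using assms by (intro sets_PiM_I_finite) auto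
  have "emeasure (PiM I M) ?B = (\<Prod>k\<in>I. emeasure (M k) (if k = j then E else space (M k)))"
    using assms by (intro emeasure_PiM) auto
  also have "\<dots> = 0"
    using assms by (intro prod_zero bexI[of _ j]) auto
  finally show "?B \<in> null_sets (PiM I M)"
    using sets by (rule null_setsI)
  show "{x \<in> space (PiM I M). \<not> x j \<notin> E} \<subseteq> ?B"
    by (auto simp: space_PiM PiE_iff extensional_def)
qed

lemma (in product_sigma_finite) null_sets_PiM_insertI:
  assumes "finite I" "i \<notin> I" "A \<in> sets (PiM (insert i I) M)"
    and sections: "AE x in PiM I M. \<exists>B\<in>null_sets (M i). \<forall>y\<in>space (M i). x(i := y) \<in> A \<longrightarrow> y \<in> B"
  shows "A \<in> null_sets (PiM (insert i I) M)"
proof -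
  have "emeasure (PiM (insert i I) M) A = (\<integral>\<^sup>+ x. (\<integral>\<^sup>+ y. indicator A (x(i := y)) \<partial>M i) \<partial>PiM I M)"
    using assms(1-3) by (simp add: product_nn_integral_insert[symmetric])
  also have "\<dots> = (\<integral>\<^sup>+ x. 0 \<partial>PiM I M)"
  proof (rule nn_integral_cong_AE)
    show "AE x in PiM I M. (\<integral>\<^sup>+ y. indicator A (x(i := y)) \<partial>M i) = 0"
      using sections
    proof eventually_elim
      case (elim x)
      then obtain B where B: "B \<in> null_sets (M i)" "\<And>y. y \<in> space (M i) \<Longrightarrow> x(i := y) \<in> A \<Longrightarrow> y \<in> B"
        by blast
      have "(\<integral>\<^sup>+ y. indicator A (x(i := y)) \<partial>M i) \<le> (\<integral>\<^sup>+ y. indicator B y \<partial>M i)"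
        using B(2) by (intro nn_integral_mono) (auto simp: indicator_def)
      also have "\<dots> = 0" using B(1) null_setsD2[OF B(1)] by (simp add: null_setsD1)
      finally show ?case by simp
    qed
  qed
  finally show ?thesis using assms(3) by (intro null_setsI) auto
qed

definition D_borel :: "nat \<Rightarrow> nat \<Rightarrow> (real \<times> nat list) measure" where
  "D_borel N d = restrict_space (borel \<Otimes>\<^sub>M count_space UNIV) (Dset N d)"

definition Dmeas_fun :: "nat \<Rightarrow> nat \<Rightarrow> (nat list \<Rightarrow> real \<Rightarrow> real) \<Rightarrow> (real \<times> nat list) set \<Rightarrow> ennreal" where
  "Dmeas_fun N d pth A =
     (\<Sum>x\<in>Lam N d. ennreal ((1 / real N) ^ d) * emeasure (tv_measure (pth x)) {s. (s, x) \<in> A})"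

lemma finite_Lam: "finite (Lam N d)"
proof -
  have "Lam N d = {xs. set xs \<subseteq> {..<N} \<and> length xs = d}" unfolding Lam_def by auto
  then show ?thesis using finite_lists_length_eq[of "{..<N}" d] by simp
qed

lemma Dset_in_sets: "Dset N d \<in> sets (borel \<Otimes>\<^sub>M count_space UNIV)"
  unfolding Dset_def by (intro pair_measureI) auto

lemma space_D_borel: "space (D_borel N d) = Dset N d"
  unfolding D_borel_def by (simp add: space_restrict_space space_pair_measure)

lemma sets_D_borel_iff:
  "A \<in> sets (D_borel N d) \<longleftrightarrow> A \<subseteq> Dset N d \<and> A \<in> sets (borel \<Otimes>\<^sub>M count_space UNIV)"
  unfolding D_borel_def using Dset_in_sets
  by (subst sets_restrict_space_iff) (auto simp: space_pair_measure)

lemma times_in_sets_D_borel: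
  "A \<in> sets borel \<Longrightarrow> A \<subseteq> {0..} \<Longrightarrow> X \<subseteq> Lam N d \<Longrightarrow> A \<times> X \<in> sets (D_borel N d)"
  unfolding sets_D_borel_iff Dset_def by (auto intro!: pair_measureI)

lemma Dmeas_eq_measure_of:
  "Dmeas N d pth = measure_of (space (D_borel N d)) (sets (D_borel N d)) (Dmeas_fun N d pth)"
  unfolding Dmeas_def Dmeas_fun_def space_D_borel unfolding D_borel_def ..

lemma sets_Dmeas: "sets (Dmeas N d pth) = sets (D_borel N d)"
  unfolding Dmeas_eq_measure_of by (rule sets.sets_measure_of_eq)

lemma space_Dmeas: "space (Dmeas N d pth) = Dset N d"
  unfolding Dmeas_eq_measure_of by (simp add: space_D_borel[symmetric] space_measure_of_conv)

lemma countably_additive_Dmeas_fun: "countably_additive (sets (D_borel N d)) (Dmeas_fun N d pth)"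
  unfolding countably_additive_def
proof (intro allI impI)
  fix A :: "nat \<Rightarrow> (real \<times> nat list) set"
  assume A: "range A \<subseteq> sets (D_borel N d)" "disjoint_family A"
  have "(\<Sum>i. emeasure (tv_measure (pth x)) {s. (s, x) \<in> A i}) =
      emeasure (tv_measure (pth x)) {s. (s, x) \<in> \<Union> (range A)}" for x
  proof -
    have "A i \<in> sets (borel \<Otimes>\<^sub>M count_space UNIV)" for i
      using A(1) sets_D_borel_iff by blast
    from sets_Pair2[OF this, of x]
    have "range (\<lambda>i. {s. (s, x) \<in> A i}) \<subseteq> sets (tv_measure (pth x))"
      by (auto simp: tv_measure_def vimage_def)
    moreover have "disjoint_family (\<lambda>i. {s. (s, x) \<in> A i})"
      using A(2) unfolding disjoint_family_on_def by auto
    moreover have "(\<Union>i. {s. (s, x) \<in> A i}) = {s. (s, x) \<in> \<Union> (range A)}" by auto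
    ultimately show ?thesis by (simp add: suminf_emeasure)
  qed
  note sections = this
  have "(\<Sum>i. Dmeas_fun N d pth (A i)) =
      (\<Sum>x\<in>Lam N d. \<Sum>i. ennreal ((1 / real N) ^ d) * emeasure (tv_measure (pth x)) {s. (s, x) \<in> A i})"
    unfolding Dmeas_fun_def by (rule suminf_sum) simp
  also have "\<dots> = Dmeas_fun N d pth (\<Union> (range A))"
    unfolding Dmeas_fun_def by (simp add: ennreal_suminf_cmult sections)
  finally show "(\<Sum>i. Dmeas_fun N d pth (A i)) = Dmeas_fun N d pth (\<Union> (range A))" .
qed

lemma emeasure_Dmeas: "A \<in> sets (D_borel N d) \<Longrightarrow> emeasure (Dmeas N d pth) A = Dmeas_fun N d pth A"
  unfolding Dmeas_eq_measure_of
  by (rule emeasure_measure_of_sigma[OF sets.sigma_algebra_axioms _ countably_additive_Dmeas_fun])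
    (simp add: positive_def Dmeas_fun_def)

lemma emeasure_Dmeas_times:
  assumes "A \<in> sets borel" "A \<subseteq> {0..}" "X \<subseteq> Lam N d"
  shows "emeasure (Dmeas N d pth) (A \<times> X) =
    (\<Sum>x\<in>X. ennreal ((1 / real N) ^ d) * emeasure (tv_measure (pth x)) A)"
proof -
  have "emeasure (Dmeas N d pth) (A \<times> X) =
      (\<Sum>x\<in>Lam N d. if x \<in> X then ennreal ((1 / real N) ^ d) * emeasure (tv_measure (pth x)) A else 0)"
    using assms unfolding emeasure_Dmeas[OF times_in_sets_D_borel[OF assms]] Dmeas_fun_def
    by (intro sum.cong) auto
  also have "\<dots> = (\<Sum>x\<in>X. ennreal ((1 / real N) ^ d) * emeasure (tv_measure (pth x)) A)"
    using assms(3) finite_Lam by (simp add: sum.If_cases Int_absorb1)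
  finally show ?thesis .
qed

locale nonsimultaneous_jumps =
  fixes N d :: nat and pth :: "nat list \<Rightarrow> real \<Rightarrow> real"
  assumes no_atom_off_jumps:
      "\<And>x t. x \<in> Lam N d \<Longrightarrow> jump (pth x) t = 0 \<Longrightarrow> emeasure (tv_measure (pth x)) {t} = 0"
    and locally_finite_variation:
      "\<And>x a b. x \<in> Lam N d \<Longrightarrow> emeasure (tv_measure (pth x)) {a<..b} < \<infinity>"
    and countable_jumps: "\<And>x. x \<in> Lam N d \<Longrightarrow> countable (jump_set (pth x))"
    and no_simultaneous_jumps:
      "\<And>x y t. x \<in> Lam N d \<Longrightarrow> y \<in> Lam N d \<Longrightarrow> x \<noteq> y \<Longrightarrow> jump (pth x) t * jump (pth y) t = 0"
begin

abbreviation \<mu> :: "(real \<times> nat list) measure" where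
  "\<mu> \<equiv> Dmeas N d pth"

lemma sigma_finite_Dmeas: "sigma_finite_measure \<mu>"
  unfolding sigma_finite_measure_def
proof (intro exI conjI ballI)
  let ?A = "(\<lambda>(T::nat, x). {0..real T} \<times> {x}) ` (UNIV \<times> Lam N d)"
  show "countable ?A"
    using finite_Lam by (intro countable_image countable_SIGMA) (auto intro: countable_finite)
  show "?A \<subseteq> sets \<mu>"
    unfolding sets_Dmeas by (auto intro!: times_in_sets_D_borel)
  show "\<Union> ?A = space \<mu>"
    unfolding space_Dmeas Dset_def by (auto intro: real_arch_simple)
  fix B assume "B \<in> ?A"
  then obtain T x where B: "B = {0..real T} \<times> {x}" "x \<in> Lam N d" by auto
  have "emeasure (tv_measure (pth x)) {0..real T} \<le> emeasure (tv_measure (pth x)) {-1<..real T}"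
    by (intro emeasure_mono) (auto simp: tv_measure_def)
  also have "\<dots> < \<infinity>" using locally_finite_variation[OF B(2)] .
  finally show "emeasure \<mu> B \<noteq> \<infinity>"
    using B by (simp add: emeasure_Dmeas_times ennreal_mult_eq_top_iff)
qed

definition jump_elsewhere :: "(real \<times> nat list) set" where
  "jump_elsewhere = {p \<in> Dset N d. \<exists>x\<in>Lam N d. x \<noteq> snd p \<and> jump (pth x) (fst p) \<noteq> 0}"

lemma countable_jump_elsewhere: "countable jump_elsewhere"
proof (rule countable_subset)
  show "jump_elsewhere \<subseteq> (\<Union>x\<in>Lam N d. jump_set (pth x)) \<times> Lam N d"
    unfolding jump_elsewhere_def Dset_def jump_set_def by auto
  show "countable ((\<Union>x\<in>Lam N d. jump_set (pth x)) \<times> Lam N d)"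
    using finite_Lam countable_jumps by (intro countable_SIGMA countable_UN) (auto intro: countable_finite)
qed

lemma jump_elsewhere_null: "jump_elsewhere \<in> null_sets \<mu>"
proof
  have "{p} \<in> sets (D_borel N d)" if "p \<in> jump_elsewhere" for p
    using that times_in_sets_D_borel[of "{fst p}" "{snd p}" N d]
    unfolding jump_elsewhere_def Dset_def by (cases p) auto
  then show sets: "jump_elsewhere \<in> sets \<mu>"
    unfolding sets_Dmeas by (rule sets.countable[OF _ countable_jump_elsewhere])
  have "emeasure (tv_measure (pth y)) {s. (s, y) \<in> jump_elsewhere} = 0" if y: "y \<in> Lam N d" for y
  proof -
    let ?S = "{s. (s, y) \<in> jump_elsewhere}"
    have "countable ?S"
      by (rule countable_subset[OF _ countable_image[OF countable_jump_elsewhere, of fst]]) force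
    then have "emeasure (tv_measure (pth y)) ?S =
        (\<integral>\<^sup>+s. emeasure (tv_measure (pth y)) {s} \<partial>count_space ?S)"
      by (intro emeasure_countable_singleton) (auto simp: tv_measure_def)
    also have "\<dots> = (\<integral>\<^sup>+s. 0 \<partial>count_space ?S)"
    proof (intro nn_integral_cong)
      fix s assume "s \<in> space (count_space ?S)"
      then obtain x where "x \<in> Lam N d" "x \<noteq> y" "jump (pth x) s \<noteq> 0"
        unfolding jump_elsewhere_def by auto
      then have "jump (pth y) s = 0" using no_simultaneous_jumps[OF _ y] by force
      then show "emeasure (tv_measure (pth y)) {s} = 0" by (rule no_atom_off_jumps[OF y])
    qed
    finally show ?thesis by simp
  qed
  then show "emeasure \<mu> jump_elsewhere = 0"
    using sets unfolding sets_Dmeas by (simp add: emeasure_Dmeas Dmeas_fun_def)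
qed

lemma other_sites_null:
  assumes "q \<in> Dset N d" "q \<notin> jump_elsewhere"
  shows "{fst q} \<times> (Lam N d - {snd q}) \<in> null_sets \<mu>"
proof
  show sets: "{fst q} \<times> (Lam N d - {snd q}) \<in> sets \<mu>"
    using assms(1) unfolding sets_Dmeas Dset_def by (intro times_in_sets_D_borel) auto
  have "jump (pth x) (fst q) = 0" if "x \<in> Lam N d - {snd q}" for x
    using assms that unfolding jump_elsewhere_def by auto
  then show "emeasure \<mu> ({fst q} \<times> (Lam N d - {snd q})) = 0"
    using assms(1) unfolding Dset_def
    by (subst emeasure_Dmeas_times) (auto simp: no_atom_off_jumps)
qed

definition coincidence_set :: "nat set \<Rightarrow> nat \<Rightarrow> nat \<Rightarrow> (nat \<Rightarrow> real \<times> nat list) set" where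
  "coincidence_set I i j =
     {z \<in> space (PiM I (\<lambda>_. \<mu>)). fst (z i) = fst (z j) \<and> snd (z i) \<noteq> snd (z j)}"

lemma coincidence_set_in_sets:
  assumes "i \<in> I" "j \<in> I"
  shows "coincidence_set I i j \<in> sets (PiM I (\<lambda>_. \<mu>))"
proof -
  have "fst \<in> borel_measurable \<mu>" "snd \<in> measurable \<mu> (count_space UNIV)"
    unfolding measurable_cong_sets[OF sets_Dmeas refl] D_borel_def
    by (intro measurable_restrict_space1 measurable_fst measurable_snd)+
  then have fst_component: "(\<lambda>z. fst (z k)) \<in> borel_measurable (PiM I (\<lambda>_. \<mu>))"
    and snd_component: "(\<lambda>z. snd (z k)) \<in> measurable (PiM I (\<lambda>_. \<mu>)) (count_space UNIV)"
    if "k \<in> I" for k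
    using that by (auto intro: measurable_compose[OF measurable_component_singleton])
  have "Measurable.pred (PiM I (\<lambda>_. \<mu>)) (\<lambda>z. fst (z i) = fst (z j))"
    unfolding pred_def using assms by (intro measurable_equality_set fst_component)
  moreover have "Measurable.pred (PiM I (\<lambda>_. \<mu>)) (\<lambda>z. (snd (z i), snd (z j)) \<in> {q. fst q \<noteq> snd q})"
    using measurable_Pair[OF snd_component[OF assms(1)] snd_component[OF assms(2)]]
    by (intro pred_sets2[where N="count_space UNIV"]) (auto simp: pair_measure_countable)
  ultimately show ?thesis
    unfolding coincidence_set_def pred_def[symmetric] by (simp add: pred_intros_logic)
qed

lemma coincidence_set_null:
  assumes "finite I" "i \<in> I" "j \<in> I" "i \<noteq> j"
  shows "coincidence_set I i j \<in> null_sets (PiM I (\<lambda>_. \<mu>))"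
proof -
  interpret product_sigma_finite "\<lambda>_. \<mu>"
    by (simp add: product_sigma_finite_def sigma_finite_Dmeas)
  define I' where "I' = I - {i}"
  have I': "I = insert i I'" "i \<notin> I'" "finite I'" "j \<in> I'"
    using assms unfolding I'_def by auto
  have "AE x in PiM I' (\<lambda>_. \<mu>). x j \<notin> jump_elsewhere"
    using I' by (intro AE_PiM_component_notin jump_elsewhere_null)
  then have sections: "AE x in PiM I' (\<lambda>_. \<mu>).
      \<exists>B\<in>null_sets \<mu>. \<forall>y\<in>space \<mu>. x(i := y) \<in> coincidence_set I i j \<longrightarrow> y \<in> B"
    using AE_space
  proof eventually_elim
    case (elim x)
    then have "x j \<in> Dset N d" using I' by (auto simp: space_PiM space_Dmeas)
    show ?case
    proof (intro bexI ballI impI)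
      show "{fst (x j)} \<times> (Lam N d - {snd (x j)}) \<in> null_sets \<mu>"
        by (rule other_sites_null[OF \<open>x j \<in> Dset N d\<close> elim(1)])
      fix y assume "y \<in> space \<mu>" "x(i := y) \<in> coincidence_set I i j"
      then show "y \<in> {fst (x j)} \<times> (Lam N d - {snd (x j)})"
        using assms by (auto simp: coincidence_set_def space_Dmeas Dset_def mem_Times_iff)
    qed
  qed
  have "coincidence_set I i j \<in> sets (PiM (insert i I') (\<lambda>_. \<mu>))"
    using coincidence_set_in_sets[OF assms(2,3)] I'(1) by simp
  from null_sets_PiM_insertI[OF I'(3,2) this sections] show ?thesis
    using I'(1) by simp
qed

lemma Cset_eq_Union_coincidence_sets:
  "Cset N d n = (\<Union>i<n. \<Union>j\<in>{..<n} - {i}. coincidence_set {..<n} i j)"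
proof (intro equalityI subsetI)
  fix z assume "z \<in> Cset N d n"
  then obtain i j where "z \<in> {..<n} \<rightarrow>\<^sub>E Dset N d" "i < n" "j < n" "i \<noteq> j"
    "fst (z i) = fst (z j)" "snd (z i) \<noteq> snd (z j)"
    unfolding Cset_def by blast
  then show "z \<in> (\<Union>i<n. \<Union>j\<in>{..<n} - {i}. coincidence_set {..<n} i j)"
    by (auto simp: coincidence_set_def space_PiM space_Dmeas)
next
  fix z assume "z \<in> (\<Union>i<n. \<Union>j\<in>{..<n} - {i}. coincidence_set {..<n} i j)"
  then obtain i j where ij: "i < n" "j < n" "i \<noteq> j" and z: "z \<in> {..<n} \<rightarrow>\<^sub>E Dset N d"
    "fst (z i) = fst (z j)" "snd (z i) \<noteq> snd (z j)"
    by (auto simp: coincidence_set_def space_PiM space_Dmeas)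
  have "z i \<in> {0..} \<times> Lam N d" using PiE_mem[OF z(1)] ij(1) unfolding Dset_def by blast
  then have "0 \<le> fst (z i)" by (simp add: mem_Times_iff)
  then have "fst (z i) \<in> {0..<real (nat \<lceil>fst (z i)\<rceil> + 1)}" by simp linarith
  then show "z \<in> Cset N d n" unfolding Cset_def using ij z by blast
qed

lemma Cset_null: "Cset N d n \<in> null_sets (PiM {..<n} (\<lambda>_. \<mu>))"
  unfolding Cset_eq_Union_coincidence_sets
  by (intro null_sets_UN' countable_finite coincidence_set_null) auto

end

lemma nonsimultaneous_jumpsI:
  assumes paths: "\<And>x. x \<in> Lam N d \<Longrightarrow> jump_drift_path (pth x) (L x) (K x)"
    and "\<And>x y t. x \<in> Lam N d \<Longrightarrow> y \<in> Lam N d \<Longrightarrow> x \<noteq> y \<Longrightarrow> jump (pth x) t * jump (pth y) t = 0"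
  shows "nonsimultaneous_jumps N d pth"
proof
  fix x t assume "x \<in> Lam N d" "jump (pth x) t = 0"
  then show "emeasure (tv_measure (pth x)) {t} = 0"
    by (intro jump_drift_path.emeasure_tv_measure_singleton[OF paths])
next
  fix x a b assume "x \<in> Lam N d"
  then show "emeasure (tv_measure (pth x)) {a<..b} < \<infinity>"
    by (intro jump_drift_path.emeasure_tv_measure_Ioc_finite[OF paths])
next
  fix x assume "x \<in> Lam N d"
  then show "countable (jump_set (pth x))"
    by (intro jump_drift_path.countable_jump_set[OF paths])
qed fact

section \<open>Paths of the martingales\<close>

lemma abs_set_integral_Icc_diff_le:
  fixes g :: "real \<Rightarrow> real"
  assumes meas: "\<And>t. 0 \<le> t \<Longrightarrow> g \<in> borel_measurable (restrict_space borel {0..t})"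
    and bounded: "\<And>s. 0 \<le> s \<Longrightarrow> \<bar>g s\<bar> \<le> B"
    and "0 \<le> r'" "r' \<le> r"
  shows "\<bar>(LINT s:{0..r}|lborel. g s) - (LINT s:{0..r'}|lborel. g s)\<bar> \<le> B * (r - r')"
proof -
  have integrable: "integrable lborel (\<lambda>s. indicator {0..t} s * g s)" if "0 \<le> t" for t
  proof (rule integrableI_bounded_set[where A="{0..t}" and B=B])
    have "(\<lambda>s. indicator {0..t} s *\<^sub>R g s) \<in> borel_measurable borel"
      using meas[OF that] by (subst borel_measurable_restrict_space_iff[symmetric]) auto
    then show "(\<lambda>s. indicator {0..t} s * g s) \<in> borel_measurable lborel" by simp
    show "emeasure lborel {0..t} < \<infinity>" using that by (simp add: emeasure_lborel_Icc)
    show "AE x\<in>{0..t} in lborel. norm (indicator {0..t} x * g x) \<le> B" using bounded by auto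
  qed auto
  have diff: "(\<lambda>s. indicator {0..r} s * g s - indicator {0..r'} s * g s) = (\<lambda>s. indicator {r'<..r} s * g s)"
    using assms(3,4) by (auto simp: indicator_def fun_eq_iff)
  have "(LINT s:{0..r}|lborel. g s) - (LINT s:{0..r'}|lborel. g s) = (LINT s|lborel. indicator {r'<..r} s * g s)"
    unfolding set_lebesgue_integral_def using integrable assms(3,4)
    by (simp add: Bochner_Integration.integral_diff[symmetric] diff)
  moreover have "integrable lborel (\<lambda>s. indicator {r'<..r} s * g s)"
    using integrable[of r] integrable[of r'] assms(3,4) unfolding diff[symmetric] by auto
  then have "norm (LINT s|lborel. indicator {r'<..r} s * g s) \<le> (LINT s|lborel. B * indicator {r'<..r} s)"
    using assms(3,4) bounded
    by (intro Bochner_Integration.integral_norm_bound_integral integrable_mult_right integrable_real_indicator)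
      (auto simp: indicator_def)
  ultimately show ?thesis using assms(3,4) by simp
qed

lemma progressive_measurable_path:
  assumes "progressive F X" "0 \<le> t" "\<omega> \<in> space (F t)"
  shows "(\<lambda>s. X s \<omega>) \<in> borel_measurable (restrict_space borel {0..t})"
  using measurable_Pair1[of "\<lambda>(s, \<omega>). X s \<omega>", OF _ assms(3)] assms(1,2)
  unfolding progressive_def by simp

lemma jump_drift_path_of_cadlag:
  assumes cadlag: "cadlag_on_nonneg f" and "\<delta> > 0"
    and big_jumps: "\<And>t. 0 \<le> t \<Longrightarrow> jump f t \<noteq> 0 \<Longrightarrow> \<delta> \<le> \<bar>jump f t\<bar>"
    and decomposition:
      "\<And>t. 0 \<le> t \<Longrightarrow> f t = infsum (\<lambda>s. jump f s) {0..t} - K * (LINT s:{0..t}|lborel. g s)"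
    and meas: "\<And>t. 0 \<le> t \<Longrightarrow> g \<in> borel_measurable (restrict_space borel {0..t})"
    and bounded: "\<And>s. 0 \<le> s \<Longrightarrow> \<bar>g s\<bar> \<le> B" and "0 \<le> K"
  shows "jump_drift_path f (\<lambda>t. K * (LINT s:{0..t}|lborel. g s)) (K * B)"
proof
  have "\<delta> \<le> \<bar>jump f t\<bar>" if "jump f t \<noteq> 0" for t
    using big_jumps[of t] jump_nonpos[of t f] that by (cases "0 \<le> t") auto
  then show finite: "finite (jump_set f \<inter> {..T})" for T
    by (rule finite_jump_set_cadlag[OF cadlag \<open>\<delta> > 0\<close>])
  fix t :: real assume "0 \<le> t"
  have "infsum (\<lambda>s. jump f s) {0..t} = infsum (\<lambda>s. jump f s) (jump_set f \<inter> {0..t})"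
    by (rule infsum_cong_neutral) (auto simp: jump_set_def)
  also have "\<dots> = (\<Sum>s\<in>jump_set f \<inter> {0..t}. jump f s)"
    using finite[of t] by (intro infsum_finite) (rule finite_subset[rotated], auto)
  finally show "f t = (\<Sum>s\<in>jump_set f \<inter> {0..t}. jump f s) - K * (LINT s:{0..t}|lborel. g s)"
    using decomposition[OF \<open>0 \<le> t\<close>] by simp
next
  fix r r' :: real assume "0 \<le> r'" "r' \<le> r"
  then show "\<bar>K * (LINT s:{0..r}|lborel. g s) - K * (LINT s:{0..r'}|lborel. g s)\<bar> \<le> K * B * (r - r')"
    using abs_set_integral_Icc_diff_le[OF meas bounded] \<open>0 \<le> K\<close>
    by (simp add: abs_mult mult.assoc right_diff_distrib[symmetric] mult_left_mono)
qed

theorem lemma2p8: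
  fixes P :: "'a measure" and F :: "real \<Rightarrow> 'a measure"
    and N d n :: nat and k c Cb :: real
    and M :: "nat list \<Rightarrow> real \<Rightarrow> 'a \<Rightarrow> real"
    and Cq Cd :: "real \<Rightarrow> nat list \<Rightarrow> 'a \<Rightarrow> real"
  assumes "prob_space P" and "usual_filtration P F"
    and "N \<ge> 1" and "d \<ge> 1" and "n \<ge> 2"
    and mart: "\<And>x. x \<in> Lam N d \<Longrightarrow> cadlag_sq_int_martingale P F (M x)"
    \<comment> \<open>(A1)\<close>
    and A1_cross: "\<And>x y. x \<in> Lam N d \<Longrightarrow> y \<in> Lam N d \<Longrightarrow> x \<noteq> y \<Longrightarrow>
                    martingale P F (\<lambda>t \<omega>. M x t \<omega> * M y t \<omega>)"
    and A1_diag: "\<And>x. x \<in> Lam N d \<Longrightarrow>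
                    martingale P F (\<lambda>t \<omega>. (M x t \<omega>)\<^sup>2 -
                      real N ^ d * (LINT s:{0..t}|lborel. Cq s x \<omega>))"
    and A1_prog: "\<And>x. x \<in> Lam N d \<Longrightarrow> progressive F (\<lambda>s \<omega>. Cq s x \<omega>)"
    and A1_bd: "AE \<omega> in P. \<forall>x\<in>Lam N d. \<forall>s\<ge>0. \<bar>Cq s x \<omega>\<bar> \<le> Cb"
    \<comment> \<open>(A2)\<close>
    and A2: "\<And>T. T > 0 \<Longrightarrow> AE \<omega> in P. \<forall>x\<in>Lam N d. \<forall>y\<in>Lam N d. x \<noteq> y \<longrightarrow>
               (\<forall>t\<in>{0..T}. jump (\<lambda>r. M x r \<omega>) t * jump (\<lambda>r. M y r \<omega>) t = 0)"
    \<comment> \<open>(A3)\<close>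
    and "k > - real d / 2" and "c > 0"
    and A3: "AE \<omega> in P. \<forall>x\<in>Lam N d. \<forall>t\<ge>0. jump (\<lambda>r. M x r \<omega>) t \<noteq> 0 \<longrightarrow>
               \<bar>jump (\<lambda>r. M x r \<omega>) t\<bar> = c * (1 / real N) powr k"
    \<comment> \<open>(A4)\<close>
    and A4_prog: "\<And>x. x \<in> Lam N d \<Longrightarrow> progressive F (\<lambda>s \<omega>. Cd s x \<omega>)"
    and A4_bd: "AE \<omega> in P. \<forall>x\<in>Lam N d. \<forall>s\<ge>0. \<bar>Cd s x \<omega>\<bar> \<le> Cb"
    and A4: "AE \<omega> in P. \<forall>x\<in>Lam N d. \<forall>t\<ge>0.
               M x t \<omega> = infsum (\<lambda>s. jump (\<lambda>r. M x r \<omega>) s) {0..t}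
                 - real N powr (k + real d) * (LINT s:{0..t}|lborel. Cd s x \<omega>)"
  shows "AE \<omega> in P. Cset N d n \<in> null_sets (PiM {..<n} (\<lambda>_. Dmeas N d (\<lambda>x t. M x t \<omega>)))"
proof -
  have space_F: "space (F t) = space P" for t
    using \<open>usual_filtration P F\<close> unfolding usual_filtration_def by (simp add: filtration.space_F)
  have "AE \<omega> in P. \<forall>x\<in>Lam N d. cadlag_on_nonneg (\<lambda>t. M x t \<omega>)"
    using mart by (intro AE_finite_allI finite_Lam) (simp add: cadlag_sq_int_martingale_def)
  moreover have "AE \<omega> in P. \<forall>T::nat. \<forall>x\<in>Lam N d. \<forall>y\<in>Lam N d. x \<noteq> y \<longrightarrow>
      (\<forall>t\<in>{0..real (Suc T)}. jump (\<lambda>r. M x r \<omega>) t * jump (\<lambda>r. M y r \<omega>) t = 0)"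
    unfolding AE_all_countable by (intro allI A2) simp
  ultimately show ?thesis
    using A3 A4_bd A4 AE_space
  proof eventually_elim
    case (elim \<omega>)
    have "jump_drift_path (\<lambda>t. M x t \<omega>)
        (\<lambda>t. real N powr (k + real d) * (LINT s:{0..t}|lborel. Cd s x \<omega>)) (real N powr (k + real d) * Cb)"
      if x: "x \<in> Lam N d" for x
    proof (rule jump_drift_path_of_cadlag[where \<delta>="c * (1 / real N) powr k"])
      show "(\<lambda>s. Cd s x \<omega>) \<in> borel_measurable (restrict_space borel {0..t})" if "0 \<le> t" for t
        using progressive_measurable_path[OF A4_prog[OF x] that] elim(6) by (simp add: space_F)
    qed (use elim x \<open>c > 0\<close> \<open>N \<ge> 1\<close> in auto)
    moreover have "jump (\<lambda>t. M x t \<omega>) t * jump (\<lambda>t. M y t \<omega>) t = 0"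
      if "x \<in> Lam N d" "y \<in> Lam N d" "x \<noteq> y" for x y t
    proof (cases "0 \<le> t")
      case True
      then have "t \<in> {0..real (Suc (nat \<lceil>t\<rceil>))}" by simp linarith
      then show ?thesis using elim(2) that by blast
    qed (simp add: jump_nonpos)
    ultimately have "nonsimultaneous_jumps N d (\<lambda>x t. M x t \<omega>)"
      by (rule nonsimultaneous_jumpsI)
    then show ?case by (rule nonsimultaneous_jumps.Cset_null)
  qed
qed

end
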